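(* Let $R$ be a commutative ring endowed with a translation-invariant partial order $\le$ on its additive group such that $R^+$ is stable under multiplication with squares, i.e. $r^2s\in R^+$ for all $r\in R$, $s\in R^+$. If $R$ is archimedean and localizable, then $pq\in R^+$ for all $p,q\in R^+$ (so $R$ is a partially ordered commutative ring).
   Context: Rings are commutative with unit $1$; $\mathbb{N}=\{1,2,\dots\}$. Translation-invariant means $r\le s$ implies $r+t\le s+t$; $R^+=\{r:0\le r\}$. A partially ordered commutative ring is such a ring whose positive cone is closed under multiplication and contains all squares. $R$ is archimedean if whenever $g,h\in R$ satisfy $kg+h\in R^+$ for all $k\in\mathbb{N}$, then $g\in R^+$. $\mathrm{Loc}(R)$ is the set of $s\in 1+R^+$ such that for all $r\in R$, $rs\in R^+$ implies $r\in R^+$. $R$ is localizable if for every $r\in R$ there exists $s\in\mathrm{Loc}(R)$ with $-s\le r\le s$. *)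

theory Defs
  imports Main
begin

definition pos_cone :: "('a::comm_ring_1 \<Rightarrow> 'a \<Rightarrow> bool) \<Rightarrow> 'a set" where
  "pos_cone le = {r. le 0 r}"

definition partial_order_rel :: "('a \<Rightarrow> 'a \<Rightarrow> bool) \<Rightarrow> bool" where
  "partial_order_rel le \<longleftrightarrow> (\<forall>x. le x x) \<and> (\<forall>x y. le x y \<longrightarrow> le y x \<longrightarrow> x = y)
     \<and> (\<forall>x y z. le x y \<longrightarrow> le y z \<longrightarrow> le x z)"

definition translation_invariant :: "('a::comm_ring_1 \<Rightarrow> 'a \<Rightarrow> bool) \<Rightarrow> bool" where
  "translation_invariant le \<longleftrightarrow> (\<forall>r s t. le r s \<longrightarrow> le (r + t) (s + t))"

definition archimedean_rel :: "('a::comm_ring_1 \<Rightarrow> 'a \<Rightarrow> bool) \<Rightarrow> bool" where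
  "archimedean_rel le \<longleftrightarrow> (\<forall>g h. (\<forall>k::nat. k \<ge> 1 \<longrightarrow> of_nat k * g + h \<in> pos_cone le)
      \<longrightarrow> g \<in> pos_cone le)"

definition Loc :: "('a::comm_ring_1 \<Rightarrow> 'a \<Rightarrow> bool) \<Rightarrow> 'a set" where
  "Loc le = {s. s - 1 \<in> pos_cone le \<and> (\<forall>r. r * s \<in> pos_cone le \<longrightarrow> r \<in> pos_cone le)}"

definition localizable :: "('a::comm_ring_1 \<Rightarrow> 'a \<Rightarrow> bool) \<Rightarrow> bool" where
  "localizable le \<longleftrightarrow> (\<forall>r. \<exists>s \<in> Loc le. le (- s) r \<and> le r s)"

end

theory Submission
  imports Defs
begin

text \<open>
  Elements of \<open>Loc\<close> are positive, closed under products and can be cancelled from positive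
  products; with the archimedean property this also makes the positive cone torsion-free.
  For positive \<open>x, y\<close> with \<open>x + y \<in> Loc\<close> the identity \<open>(x + y) x y = x\<^sup>2 y + y\<^sup>2 x\<close> gives
  \<open>x y \<ge> 0\<close>. Now let \<open>0 \<le> a \<le> A\<close> and \<open>0 \<le> b \<le> B\<close> with \<open>A, B \<in> Loc\<close>. Then also
  \<open>0 \<le> 4a(A - a) \<le> A\<^sup>2\<close>, as \<open>A\<^sup>2 - 4a(A - a) = (A - 2a)\<^sup>2\<close>, and a polynomial identity shows that
  \<open>c \<cdot> 4a(A - a) \<cdot> 4b(B - b) + A\<^sup>2B\<^sup>2 \<ge> 0\<close> implies \<open>16c \<cdot> ab + AB \<ge> 0\<close> after cancelling \<open>AB\<close>.
  Starting from \<open>4ab + AB \<ge> 0\<close>, this gives \<open>4 \<cdot> 16\<^sup>n ab + AB \<ge> 0\<close> for all \<open>n\<close>, hence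
  \<open>ab \<ge> 0\<close> by the archimedean property.
\<close>

locale square_stable_order =
  fixes le :: "'a::comm_ring_1 \<Rightarrow> 'a \<Rightarrow> bool"
  assumes partial_order: "partial_order_rel le"
    and translation_invariant: "translation_invariant le"
    and square_mult_pos: "\<forall>r s. s \<in> pos_cone le \<longrightarrow> r^2 * s \<in> pos_cone le"
begin

abbreviation pos :: "'a \<Rightarrow> bool" where "pos x \<equiv> x \<in> pos_cone le"

lemma pos_iff_le: "pos x \<longleftrightarrow> le 0 x"
  by (simp add: pos_cone_def)

lemma le_iff_pos_diff: "le x y \<longleftrightarrow> pos (y - x)"
proof
  assume "le x y"
  then have "le (x + - x) (y + - x)"
    using translation_invariant unfolding translation_invariant_def by blast
  then show "pos (y - x)" by (simp add: pos_iff_le)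
next
  assume "pos (y - x)"
  then have "le (0 + x) (y - x + x)"
    using translation_invariant unfolding translation_invariant_def pos_iff_le by blast
  then show "le x y" by simp
qed

lemma pos_add: "pos a \<Longrightarrow> pos b \<Longrightarrow> pos (a + b)"
proof -
  assume "pos a" "pos b"
  then have "le 0 b" and "le b (a + b)" by (simp add: pos_iff_le, simp add: le_iff_pos_diff)
  then show "pos (a + b)"
    using partial_order unfolding partial_order_rel_def pos_iff_le by blast
qed

lemma pos_mult_square: "pos s \<Longrightarrow> pos (r * r * s)"
  using square_mult_pos by (metis power2_eq_square)

lemma pos_of_nat_mult: "pos x \<Longrightarrow> pos (of_nat n * x)"
proof (induction n)
  case 0
  then show ?case using pos_mult_square[of x 0] by simp
next
  case (Suc n)
  then have "pos (of_nat n * x + x)" by (simp add: pos_add)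
  then show ?case by (simp add: algebra_simps)
qed

lemma pos_numeral_mult: "pos x \<Longrightarrow> pos (numeral k * x)"
  using pos_of_nat_mult[of x "numeral k"] by simp

lemma Loc_cancel: "s \<in> Loc le \<Longrightarrow> pos (r * s) \<Longrightarrow> pos r"
  unfolding Loc_def by blast

lemma pos_mult_Loc: "s \<in> Loc le \<Longrightarrow> pos x \<Longrightarrow> pos (x * s)"
  using pos_mult_square[of x s] Loc_cancel[of s "x * s"] by (simp add: algebra_simps)

lemma Loc_mult: "s \<in> Loc le \<Longrightarrow> t \<in> Loc le \<Longrightarrow> s * t \<in> Loc le"
proof -
  assume s: "s \<in> Loc le" and t: "t \<in> Loc le"
  have "pos ((s - 1) * t + (t - 1))"
    using s t pos_mult_Loc pos_add unfolding Loc_def by blast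
  then have "pos (s * t - 1)" by (simp add: algebra_simps)
  moreover have "pos r" if "pos (r * (s * t))" for r
    using that s t Loc_cancel by (metis mult.assoc)
  ultimately show ?thesis unfolding Loc_def by blast
qed

end

locale archimedean_localizable_order = square_stable_order +
  assumes archimedean: "archimedean_rel le"
    and localizable: "localizable le"
begin

lemma Loc_bound: obtains s where "s \<in> Loc le" "pos (r + s)" "pos (s - r)"
proof -
  obtain s where s: "s \<in> Loc le" "le (- s) r" "le r s"
    using localizable unfolding localizable_def by blast
  have "pos (r + s)" "pos (s - r)" using s(2,3) le_iff_pos_diff by simp_all
  with s(1) show ?thesis by (rule that)
qed

lemma pos_one: "pos 1"
proof -
  obtain s where "s \<in> Loc le" "pos s" using Loc_bound[of 0] by auto
  then show ?thesis using Loc_cancel[of s 1] by simp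
qed

lemma pos_square: "pos (r * r)"
  using pos_mult_square[OF pos_one, of r] by simp

lemma Loc_imp_pos: "s \<in> Loc le \<Longrightarrow> pos s"
  using pos_add[OF _ pos_one, of "s - 1"] unfolding Loc_def by auto

lemma pos_of_nat_mult_cancel:
  assumes m: "m \<ge> 1" and mr: "pos (of_nat m * r)"
  shows "pos r"
proof -
  obtain t where t: "t \<in> Loc le" "pos (r + t)" using Loc_bound[of r] by blast
  have "pos (of_nat k * r + of_nat m * t)" for k
  proof -
    let ?q = "k div m" and ?j = "k mod m"
    have "(of_nat k :: 'a) = of_nat ?q * of_nat m + of_nat ?j"
      by (metis div_mult_mod_eq of_nat_add of_nat_mult)
    moreover have "?j \<le> m" using m by (simp add: less_imp_le_nat)
    ultimately have "of_nat k * r + of_nat m * t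
        = of_nat ?q * (of_nat m * r) + of_nat ?j * (r + t) + of_nat (m - ?j) * t"
      by (simp add: of_nat_diff algebra_simps)
    moreover have "pos \<dots>"
      using mr t Loc_imp_pos by (metis pos_add pos_of_nat_mult)
    ultimately show ?thesis by simp
  qed
  then show ?thesis using archimedean unfolding archimedean_rel_def by blast
qed

lemma pos_if_unbounded_multiples:
  assumes h: "pos h" and M: "\<And>k. \<exists>M \<ge> k. pos (of_nat M * g + h)"
  shows "pos g"
proof -
  have "pos (of_nat k * g + h)" if "k \<ge> 1" for k
  proof -
    obtain M where "M \<ge> k" and Mgh: "pos (of_nat M * g + h)" using M by blast
    then have "of_nat M * (of_nat k * g + h) = of_nat k * (of_nat M * g + h) + of_nat (M - k) * h"
      by (simp add: of_nat_diff algebra_simps)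
    moreover have "pos \<dots>" using h Mgh by (simp add: pos_add pos_of_nat_mult)
    ultimately have "pos (of_nat M * (of_nat k * g + h))" by simp
    moreover have "M \<ge> 1" using \<open>M \<ge> k\<close> that by simp
    ultimately show ?thesis using pos_of_nat_mult_cancel by blast
  qed
  then show ?thesis using archimedean unfolding archimedean_rel_def by blast
qed

lemma pos_mult_if_sum_Loc_multiple:
  assumes x: "pos x" and y: "pos y" and s: "s \<in> Loc le" and m: "m \<ge> 1"
    and sum: "x + y = of_nat m * s"
  shows "pos (x * y)"
proof -
  have "pos (x * x * y + y * y * x)" using x y by (simp add: pos_add pos_mult_square)
  also have "x * x * y + y * y * x = x * y * (x + y)" by (simp add: algebra_simps)
  also have "\<dots> = of_nat m * (x * y * s)" unfolding sum by (simp add: algebra_simps)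
  finally show ?thesis using pos_of_nat_mult_cancel[OF m] Loc_cancel[OF s] by blast
qed

lemma Loc_interval_square:
  assumes a: "pos a" "pos (A - a)" and A: "A \<in> Loc le"
  shows "pos (4 * (a * (A - a)))" and "pos (A * A - 4 * (a * (A - a)))" and "A * A \<in> Loc le"
proof -
  show "pos (4 * (a * (A - a)))"
    using pos_mult_if_sum_Loc_multiple[OF a A, of 1] by (simp add: pos_numeral_mult)
  have "A * A - 4 * (a * (A - a)) = (A - 2 * a) * (A - 2 * a)" by (simp add: algebra_simps)
  then show "pos (A * A - 4 * (a * (A - a)))" by (simp add: pos_square)
  show "A * A \<in> Loc le" using Loc_mult[OF A A] .
qed

lemma pos_4_mult_add_Loc_mult:
  assumes a: "pos a" "pos (A - a)" and A: "A \<in> Loc le"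
    and b: "pos b" "pos (B - b)" and B: "B \<in> Loc le"
  shows "pos (4 * (a * b) + A * B)"
proof -
  define C where "C = A * B"
  have C: "C \<in> Loc le" unfolding C_def using Loc_mult A B .
  have x: "pos (C - a * B + b * A)"
    using pos_add[OF pos_mult_Loc[OF B a(2)] pos_mult_Loc[OF A b(1)]]
    by (simp add: C_def algebra_simps)
  have y: "pos (C - b * A + a * B)"
    using pos_add[OF pos_mult_Loc[OF A b(2)] pos_mult_Loc[OF B a(1)]]
    by (simp add: C_def algebra_simps)
  txt \<open>The two factors sum to \<open>2C\<close>, and their product is \<open>C\<^sup>2 - (aB - bA)\<^sup>2\<close>.\<close>
  have "pos ((C - a * B + b * A) * (C - b * A + a * B))"
    by (rule pos_mult_if_sum_Loc_multiple[OF x y C, where m = 2]) (simp_all add: algebra_simps)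
  then have "pos ((a * B + b * A) * (a * B + b * A) + (C - a * B + b * A) * (C - b * A + a * B))"
    by (rule pos_add[OF pos_square])
  moreover have "(a * B + b * A) * (a * B + b * A) + (C - a * B + b * A) * (C - b * A + a * B)
      = (4 * (a * b) + C) * C"
    by (simp add: C_def algebra_simps)
  ultimately have "pos ((4 * (a * b) + C) * C)" by simp
  then show ?thesis using Loc_cancel C C_def by blast
qed

lemma pos_pow16_mult_add_Loc_mult:
  assumes "pos a" "pos (A - a)" "A \<in> Loc le"
    and "pos b" "pos (B - b)" "B \<in> Loc le"
  shows "pos (of_nat (4 * 16 ^ n) * (a * b) + A * B)"
  using assms
proof (induction n arbitrary: a b A B)
  case 0
  then show ?case using pos_4_mult_add_Loc_mult by simp
next
  case (Suc n)
  define c :: 'a where "c = of_nat (4 * 16 ^ n)"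
  define a' where "a' = 4 * (a * (A - a))"
  define b' where "b' = 4 * (b * (B - b))"
  note a' = Loc_interval_square[OF Suc.prems(1-3), folded a'_def]
  note b' = Loc_interval_square[OF Suc.prems(4-6), folded b'_def]
  have "pos (16 * (a * b * (a * b)) + 4 * (a * a * b') + 4 * (b * b * a'))"
    by (intro pos_add pos_numeral_mult pos_square pos_mult_square a'(1) b'(1))
  then have "pos (c * (16 * (a * b * (a * b)) + 4 * (a * a * b') + 4 * (b * b * a'))
      + (c * (a' * b') + A * A * (B * B)))"
    using Suc.IH[OF a' b'] unfolding c_def by (rule pos_add[OF pos_of_nat_mult])
  moreover have "c * (16 * (a * b * (a * b)) + 4 * (a * a * b') + 4 * (b * b * a'))
      + (c * (a' * b') + A * A * (B * B)) = (of_nat (4 * 16 ^ Suc n) * (a * b) + A * B) * (A * B)"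
    by (simp add: c_def a'_def b'_def algebra_simps)
  ultimately have "pos ((of_nat (4 * 16 ^ Suc n) * (a * b) + A * B) * (A * B))" by simp
  then show ?case using Loc_cancel Loc_mult Suc.prems(3,6) by blast
qed

lemma pos_mult: "pos p \<Longrightarrow> pos q \<Longrightarrow> pos (p * q)"
proof -
  assume p: "pos p" and q: "pos q"
  obtain A where A: "A \<in> Loc le" "pos (A - p)" using Loc_bound[of p] by blast
  obtain B where B: "B \<in> Loc le" "pos (B - q)" using Loc_bound[of q] by blast
  have "k \<le> 4 * 16 ^ k" for k :: nat
  proof -
    have "k < 2 ^ k" by (rule less_exp)
    also have "(2::nat) ^ k \<le> 16 ^ k" by (rule power_mono) simp_all
    finally show ?thesis by simp
  qed
  then have "\<exists>M \<ge> k. pos (of_nat M * (p * q) + A * B)" for k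
    using pos_pow16_mult_add_Loc_mult[OF p A(2,1) q B(2,1)] by blast
  then show ?thesis
    using pos_if_unbounded_multiples Loc_imp_pos Loc_mult A(1) B(1) by blast
qed

end

theorem proposition5:
  fixes le :: "'a::comm_ring_1 \<Rightarrow> 'a \<Rightarrow> bool"
  assumes "partial_order_rel le"
    and "translation_invariant le"
    and "\<forall>r s. s \<in> pos_cone le \<longrightarrow> r^2 * s \<in> pos_cone le"
    and "archimedean_rel le"
    and "localizable le"
  shows "\<forall>p q. p \<in> pos_cone le \<longrightarrow> q \<in> pos_cone le \<longrightarrow> p * q \<in> pos_cone le"
proof -
  interpret archimedean_localizable_order le
    using assms by unfold_locales
  show ?thesis using pos_mult by blast
qed

end
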